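(* Suppose all distributions are Gaussian with a common known variance $\sigma^2>0$, i.e. $\nu_{a,i}=\mathcal N(\mu_{a,i},\sigma^2)$, let $\boldsymbol\mu\in\mathcal L$ and assume $\boldsymbol\beta\neq0$. Let \[ (u_0^\star,\dots,u_K^\star)\in\operatorname*{argmax}_{\mathbf u\in\Sigma_{K+1}}\ \min_{b\in[K]}\ \frac{\Delta_b^2}{2\left(\frac1{u_0}+\frac1{u_b}\right)},\qquad \Delta_b=\mu_0-\mu_b. \] Then the optimal weights for the active mode (maximizers over $\mathcal C_{\mathrm{active}}$ in the definition of $T^\star_{\mathrm{active}}(\boldsymbol\mu)^{-1}$) are given by \[ w^\star_{a,i}=u^\star_a\,\frac{|\beta_i|}{\sum_{j=1}^J|\beta_j|}\qquad\text{for all }a\in\{0,\dots,K\},\ i\le J. \] If in addition $\boldsymbol\alpha=\boldsymbol\beta$, the same weights are optimal for the agnostic and the proportional modes.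
   Context: Arms $a\in\{0,\dots,K\}$ with $K\ge1$ (arm $0$ the control), subpopulations $i\in[J]$, means $\boldsymbol\mu=(\mu_{a,i})$; the KL divergence between $\mathcal N(x,\sigma^2)$ and $\mathcal N(y,\sigma^2)$ is $d(x,y)=(x-y)^2/(2\sigma^2)$. Known $\boldsymbol\beta\in\mathbb R^J$ and $\boldsymbol\alpha\in\Sigma_J$ ($\Sigma_n$ the probability simplex). $\mu_a=\sum_i\beta_i\mu_{a,i}$, $\mathcal S_{\boldsymbol\beta}(\boldsymbol\mu)=\{a\in[K]:\mu_a>\mu_0\}$, $\mathcal L=\{\boldsymbol\mu\in\mathbb R^{(K+1)\times J}:\mu_a\ne\mu_0\ \forall a\in[K]\}$, $\mathrm{Alt}_{\boldsymbol\beta}(\boldsymbol\mu)=\{\boldsymbol\lambda\in\mathcal L:\mathcal S_{\boldsymbol\beta}(\boldsymbol\lambda)\neq\mathcal S_{\boldsymbol\beta}(\boldsymbol\mu)\}$, with $\lambda_a=\sum_i\beta_i\lambda_{a,i}$. For a constraint set $\mathcal C$, $T^\star(\boldsymbol\mu)^{-1}=\sup_{\mathbf w\in\mathcal C}\inf_{\boldsymbol\lambda\in\mathrm{Alt}_{\boldsymbol\beta}(\boldsymbol\mu)}\sum_{a,i}w_{a,i}d(\mu_{a,i},\lambda_{a,i})$; optimal weights are maximizers of this supremum. Active mode: $\mathcal C_{\mathrm{active}}=\Sigma_{(K+1)J}$; proportional: $\mathcal C_{\mathrm{prop}}=\{\mathbf w\in\Sigma_{(K+1)J}:\sum_aw_{a,i}=\alpha_i\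 \forall i\}$; agnostic: $\mathcal C_{\mathrm{agnostic}}=\{\mathbf w:w_{a,i}=\alpha_iu_a,\ \mathbf u\in\Sigma_{K+1}\}$. *)

theory Defs
  imports Complex_Main
begin

(* Arms are indexed by {0..K} (arm 0 = control), subpopulations by {1..J}.
   Mean matrices / weights are functions  nat => nat => real  (arm, subpopulation);
   only the values on {0..K} x {1..J} matter. *)

definition gauss_kl :: "real \<Rightarrow> real \<Rightarrow> real \<Rightarrow> real" where
  "gauss_kl \<sigma> x y = (x - y)^2 / (2 * \<sigma>^2)"

definition arm_mean :: "nat \<Rightarrow> (nat \<Rightarrow> real) \<Rightarrow> (nat \<Rightarrow> nat \<Rightarrow> real) \<Rightarrow> nat \<Rightarrow> real" where
  "arm_mean J \<beta> \<mu> a = (\<Sum>i\<in>{1..J}. \<beta> i * \<mu> a i)"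

definition better_set :: "nat \<Rightarrow> nat \<Rightarrow> (nat \<Rightarrow> real) \<Rightarrow> (nat \<Rightarrow> nat \<Rightarrow> real) \<Rightarrow> nat set" where
  "better_set K J \<beta> \<mu> = {a \<in> {1..K}. arm_mean J \<beta> \<mu> a > arm_mean J \<beta> \<mu> 0}"

definition Lset :: "nat \<Rightarrow> nat \<Rightarrow> (nat \<Rightarrow> real) \<Rightarrow> (nat \<Rightarrow> nat \<Rightarrow> real) set" where
  "Lset K J \<beta> = {\<mu>. \<forall>a\<in>{1..K}. arm_mean J \<beta> \<mu> a \<noteq> arm_mean J \<beta> \<mu> 0}"

definition Alt :: "nat \<Rightarrow> nat \<Rightarrow> (nat \<Rightarrow> real) \<Rightarrow> (nat \<Rightarrow> nat \<Rightarrow> real) \<Rightarrow> (nat \<Rightarrow> nat \<Rightarrow> real) set" where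
  "Alt K J \<beta> \<mu> = {lam \<in> Lset K J \<beta>. better_set K J \<beta> lam \<noteq> better_set K J \<beta> \<mu>}"

definition inner_val :: "real \<Rightarrow> nat \<Rightarrow> nat \<Rightarrow> (nat \<Rightarrow> real) \<Rightarrow> (nat \<Rightarrow> nat \<Rightarrow> real)
    \<Rightarrow> (nat \<Rightarrow> nat \<Rightarrow> real) \<Rightarrow> real" where
  "inner_val \<sigma> K J \<beta> \<mu> w =
     (INF lam\<in>Alt K J \<beta> \<mu>. (\<Sum>a\<in>{0..K}. \<Sum>i\<in>{1..J}. w a i * gauss_kl \<sigma> (\<mu> a i) (lam a i)))"

definition simplex_arms :: "nat \<Rightarrow> (nat \<Rightarrow> real) set" where
  "simplex_arms K = {u. (\<forall>a\<in>{0..K}. u a \<ge> 0) \<and> (\<Sum>a\<in>{0..K}. u a) = 1}"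

definition simplex_pops :: "nat \<Rightarrow> (nat \<Rightarrow> real) set" where
  "simplex_pops J = {v. (\<forall>i\<in>{1..J}. v i \<ge> 0) \<and> (\<Sum>i\<in>{1..J}. v i) = 1}"

definition C_active :: "nat \<Rightarrow> nat \<Rightarrow> (nat \<Rightarrow> nat \<Rightarrow> real) set" where
  "C_active K J = {w. (\<forall>a\<in>{0..K}. \<forall>i\<in>{1..J}. w a i \<ge> 0) \<and>
                      (\<Sum>a\<in>{0..K}. \<Sum>i\<in>{1..J}. w a i) = 1}"

definition C_prop :: "nat \<Rightarrow> nat \<Rightarrow> (nat \<Rightarrow> real) \<Rightarrow> (nat \<Rightarrow> nat \<Rightarrow> real) set" where
  "C_prop K J \<alpha> = {w \<in> C_active K J. \<forall>i\<in>{1..J}. (\<Sum>a\<in>{0..K}. w a i) = \<alpha> i}"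

definition C_agnostic :: "nat \<Rightarrow> nat \<Rightarrow> (nat \<Rightarrow> real) \<Rightarrow> (nat \<Rightarrow> nat \<Rightarrow> real) set" where
  "C_agnostic K J \<alpha> = {w. \<exists>u\<in>simplex_arms K. \<forall>a\<in>{0..K}. \<forall>i\<in>{1..J}. w a i = \<alpha> i * u a}"

definition optimal_weights :: "real \<Rightarrow> nat \<Rightarrow> nat \<Rightarrow> (nat \<Rightarrow> real) \<Rightarrow> (nat \<Rightarrow> nat \<Rightarrow> real)
    \<Rightarrow> (nat \<Rightarrow> nat \<Rightarrow> real) set \<Rightarrow> (nat \<Rightarrow> nat \<Rightarrow> real) \<Rightarrow> bool" where
  "optimal_weights \<sigma> K J \<beta> \<mu> C w \<longleftrightarrow>
     w \<in> C \<and> (\<forall>w'\<in>C. inner_val \<sigma> K J \<beta> \<mu> w' \<le> inner_val \<sigma> K J \<beta> \<mu> w)"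

(* Delta_b^2 / (2 (1/u_0 + 1/u_b)), with the convention 1/0 = +infinity, i.e. value 0
   when u_0 = 0 or u_b = 0 *)
definition pair_term :: "real \<Rightarrow> real \<Rightarrow> real \<Rightarrow> real" where
  "pair_term \<Delta> u0 ub = (if u0 > 0 \<and> ub > 0 then \<Delta>^2 / (2 * (1 / u0 + 1 / ub)) else 0)"

definition u_objective :: "nat \<Rightarrow> nat \<Rightarrow> (nat \<Rightarrow> real) \<Rightarrow> (nat \<Rightarrow> nat \<Rightarrow> real) \<Rightarrow> (nat \<Rightarrow> real) \<Rightarrow> real" where
  "u_objective K J \<beta> \<mu> u =
     Min ((\<lambda>b. pair_term (arm_mean J \<beta> \<mu> 0 - arm_mean J \<beta> \<mu> b) (u 0) (u b)) ` {1..K})"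

end

theory Submission
  imports Defs "HOL-Analysis.Convex"
begin

(* Let S = sum_i |beta_i|. By Cauchy-Schwarz, moving the aggregate mean of arm a by x costs at
   least u_a x^2 / (2 sigma^2 S^2) under the weights u_a |beta_i| / S. An alternative must reverse
   the order of the control and some arm b, and the cheapest such pair of displacements costs
   pair_term(Delta_b, u_0, u_b) / (sigma^2 S^2); so these weights achieve u_objective(u) / (sigma^2 S^2).
   Conversely, for any weights w with row sums W, moving the control and the minimising arm b in
   the directions sgn beta_i just past the W-weighted average of their two means shows that w
   achieves at most u_objective(W) / (sigma^2 S^2), and maximality of u concludes. *)

definition l1_norm :: "nat \<Rightarrow> (nat \<Rightarrow> real) \<Rightarrow> real" where
  "l1_norm J \<beta> = (\<Sum>j\<in>{1..J}. \<bar>\<beta> j\<bar>)"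

definition weighted_kl :: "real \<Rightarrow> nat \<Rightarrow> nat \<Rightarrow> (nat \<Rightarrow> nat \<Rightarrow> real)
    \<Rightarrow> (nat \<Rightarrow> nat \<Rightarrow> real) \<Rightarrow> (nat \<Rightarrow> nat \<Rightarrow> real) \<Rightarrow> real" where
  "weighted_kl \<sigma> K J w \<mu> lam = (\<Sum>a\<in>{0..K}. \<Sum>i\<in>{1..J}. w a i * gauss_kl \<sigma> (\<mu> a i) (lam a i))"

(* The equality case of Cauchy-Schwarz: the cheapest way to move the aggregate mean of arm a by c a. *)
definition sgn_shift :: "nat \<Rightarrow> (nat \<Rightarrow> real) \<Rightarrow> (nat \<Rightarrow> nat \<Rightarrow> real) \<Rightarrow> (nat \<Rightarrow> real)
    \<Rightarrow> nat \<Rightarrow> nat \<Rightarrow> real" where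
  "sgn_shift J \<beta> \<mu> c = (\<lambda>a i. \<mu> a i + c a * sgn (\<beta> i) / l1_norm J \<beta>)"

lemma l1_norm_pos: "\<exists>i\<in>{1..J}. \<beta> i \<noteq> 0 \<Longrightarrow> 0 < l1_norm J \<beta>"
  unfolding l1_norm_def by (auto intro: sum_pos2)

lemma inner_val_eq_INF_weighted_kl:
  "inner_val \<sigma> K J \<beta> \<mu> w = (INF lam\<in>Alt K J \<beta> \<mu>. weighted_kl \<sigma> K J w \<mu> lam)"
  unfolding inner_val_def weighted_kl_def ..

lemma weighted_kl_nonneg:
  assumes "\<forall>a\<in>{0..K}. \<forall>i\<in>{1..J}. 0 \<le> w a i"
  shows "0 \<le> weighted_kl \<sigma> K J w \<mu> lam"
  unfolding weighted_kl_def gauss_kl_def using assms by (intro sum_nonneg mult_nonneg_nonneg) auto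

lemma Cauchy_Schwarz_abs_weights:
  fixes \<beta> x :: "'a \<Rightarrow> real"
  shows "(\<Sum>i\<in>I. \<beta> i * x i)^2 \<le> (\<Sum>i\<in>I. \<bar>\<beta> i\<bar>) * (\<Sum>i\<in>I. \<bar>\<beta> i\<bar> * (x i)^2)"
proof -
  have "(sgn (\<beta> i) * sqrt \<bar>\<beta> i\<bar>) * (sqrt \<bar>\<beta> i\<bar> * x i) = \<beta> i * x i" for i
    by (simp add: mult.assoc flip: mult.assoc[of "sqrt _"]) (simp add: sgn_mult_abs)
  moreover have "(sgn (\<beta> i) * sqrt \<bar>\<beta> i\<bar>)^2 = \<bar>\<beta> i\<bar>" for i
    by (simp add: power_mult_distrib sgn_if)
  moreover have "(sqrt \<bar>\<beta> i\<bar> * x i)^2 = \<bar>\<beta> i\<bar> * (x i)^2" for i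
    by (simp add: power_mult_distrib)
  ultimately show ?thesis
    using Cauchy_Schwarz_ineq_sum[of "\<lambda>i. sgn (\<beta> i) * sqrt \<bar>\<beta> i\<bar>" "\<lambda>i. sqrt \<bar>\<beta> i\<bar> * x i" I]
    by (simp only:)
qed

lemma arm_weighted_kl_lower_bound:
  assumes S: "0 < l1_norm J \<beta>" and v: "0 \<le> v"
  shows "v * (arm_mean J \<beta> lam a - arm_mean J \<beta> \<mu> a)^2 / (2 * \<sigma>^2 * (l1_norm J \<beta>)^2)
     \<le> (\<Sum>i\<in>{1..J}. v * \<bar>\<beta> i\<bar> / l1_norm J \<beta> * gauss_kl \<sigma> (\<mu> a i) (lam a i))"
proof -
  define x where "x i = lam a i - \<mu> a i" for i
  have diff: "arm_mean J \<beta> lam a - arm_mean J \<beta> \<mu> a = (\<Sum>i\<in>{1..J}. \<beta> i * x i)"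
    unfolding arm_mean_def x_def by (simp add: sum_subtractf right_diff_distrib)
  have "v * (\<Sum>i\<in>{1..J}. \<beta> i * x i)^2 / (2 * \<sigma>^2 * (l1_norm J \<beta>)^2)
      \<le> v * (l1_norm J \<beta> * (\<Sum>i\<in>{1..J}. \<bar>\<beta> i\<bar> * (x i)^2)) / (2 * \<sigma>^2 * (l1_norm J \<beta>)^2)"
    using Cauchy_Schwarz_abs_weights[of \<beta> x "{1..J}"] v
    unfolding l1_norm_def by (intro divide_right_mono mult_left_mono) auto
  also have "\<dots> = v * (\<Sum>i\<in>{1..J}. \<bar>\<beta> i\<bar> * (x i)^2) / (2 * \<sigma>^2 * l1_norm J \<beta>)"
    using S by (simp add: power2_eq_square)
  also have "\<dots> = (\<Sum>i\<in>{1..J}. v * \<bar>\<beta> i\<bar> * (x i)^2) / (2 * \<sigma>^2 * l1_norm J \<beta>)"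
    by (simp add: sum_distrib_left mult.assoc)
  also have "\<dots> = (\<Sum>i\<in>{1..J}. v * \<bar>\<beta> i\<bar> / l1_norm J \<beta> * gauss_kl \<sigma> (\<mu> a i) (lam a i))"
    unfolding gauss_kl_def x_def sum_divide_distrib
    by (intro sum.cong) (simp_all add: power2_commute[of "lam a _"] mult.commute)
  finally show ?thesis unfolding diff .
qed

lemma Alt_obtains_reversed_arm:
  assumes "lam \<in> Alt K J \<beta> \<mu>"
  obtains b where "b \<in> {1..K}"
    "(arm_mean J \<beta> lam 0 - arm_mean J \<beta> lam b) * (arm_mean J \<beta> \<mu> 0 - arm_mean J \<beta> \<mu> b) \<le> 0"
proof -
  have "better_set K J \<beta> lam \<noteq> better_set K J \<beta> \<mu>"
    using assms unfolding Alt_def by auto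
  then obtain b where b: "b \<in> {1..K}"
    and "(arm_mean J \<beta> lam b > arm_mean J \<beta> lam 0) \<noteq> (arm_mean J \<beta> \<mu> b > arm_mean J \<beta> \<mu> 0)"
    unfolding better_set_def by blast
  then have "(arm_mean J \<beta> lam 0 - arm_mean J \<beta> lam b) * (arm_mean J \<beta> \<mu> 0 - arm_mean J \<beta> \<mu> b) \<le> 0"
    by (auto simp: mult_le_0_iff)
  with b that show ?thesis by blast
qed

lemma pair_term_le_weighted_squares:
  fixes u0 ub X Y D :: real
  assumes u0: "0 \<le> u0" and ub: "0 \<le> ub" and D: "D^2 \<le> (X - Y)^2"
  shows "2 * pair_term D u0 ub \<le> u0 * X^2 + ub * Y^2"
proof (cases "0 < u0 \<and> 0 < ub")
  case True
  have "(u0 + ub) * (u0 * X^2 + ub * Y^2) = u0 * ub * (X - Y)^2 + (u0 * X + ub * Y)^2"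
    by (simp add: power2_eq_square algebra_simps)
  also have "\<dots> \<ge> u0 * ub * D^2"
    using True D by (simp add: add_increasing2)
  finally have "u0 * ub * D^2 / (u0 + ub) \<le> u0 * X^2 + ub * Y^2"
    using True by (simp add: divide_le_eq mult.commute)
  moreover have "2 * pair_term D u0 ub = u0 * ub * D^2 / (u0 + ub)"
    using True unfolding pair_term_def by (simp add: field_simps)
  ultimately show ?thesis by simp
next
  case False
  then show ?thesis using u0 ub unfolding pair_term_def by auto
qed

lemma u_objective_le_pair_term:
  "b \<in> {1..K} \<Longrightarrow>
     u_objective K J \<beta> \<mu> u \<le> pair_term (arm_mean J \<beta> \<mu> 0 - arm_mean J \<beta> \<mu> b) (u 0) (u b)"
  unfolding u_objective_def by (intro Min_le) auto

lemma u_objective_attained: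
  assumes "1 \<le> K"
  obtains b where "b \<in> {1..K}"
    "u_objective K J \<beta> \<mu> u = pair_term (arm_mean J \<beta> \<mu> 0 - arm_mean J \<beta> \<mu> b) (u 0) (u b)"
proof -
  have "u_objective K J \<beta> \<mu> u
      \<in> (\<lambda>b. pair_term (arm_mean J \<beta> \<mu> 0 - arm_mean J \<beta> \<mu> b) (u 0) (u b)) ` {1..K}"
    unfolding u_objective_def using assms by (intro Min_in) auto
  with that show ?thesis by blast
qed

lemma u_objective_le_weighted_kl_abs_weights:
  assumes S: "0 < l1_norm J \<beta>" and lam: "lam \<in> Alt K J \<beta> \<mu>" and u: "\<forall>a\<in>{0..K}. 0 \<le> u a"
  shows "u_objective K J \<beta> \<mu> u / (\<sigma>^2 * (l1_norm J \<beta>)^2)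
     \<le> weighted_kl \<sigma> K J (\<lambda>a i. u a * \<bar>\<beta> i\<bar> / l1_norm J \<beta>) \<mu> lam"
proof -
  let ?N = "2 * \<sigma>^2 * (l1_norm J \<beta>)^2"
  define am al where "am = arm_mean J \<beta> \<mu>" and "al = arm_mean J \<beta> lam"
  define f where "f a = (\<Sum>i\<in>{1..J}. u a * \<bar>\<beta> i\<bar> / l1_norm J \<beta> * gauss_kl \<sigma> (\<mu> a i) (lam a i))" for a
  obtain b where b: "b \<in> {1..K}" and flip: "(al 0 - al b) * (am 0 - am b) \<le> 0"
    using Alt_obtains_reversed_arm[OF lam] unfolding am_def al_def by blast
  have "((al 0 - am 0) - (al b - am b))^2
      = (al 0 - al b)^2 - 2 * ((al 0 - al b) * (am 0 - am b)) + (am 0 - am b)^2"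
    by (simp add: power2_eq_square algebra_simps)
  then have "(am 0 - am b)^2 \<le> ((al 0 - am 0) - (al b - am b))^2"
    using flip zero_le_power2[of "al 0 - al b"] by linarith
  then have pair: "2 * pair_term (am 0 - am b) (u 0) (u b) \<le> u 0 * (al 0 - am 0)^2 + u b * (al b - am b)^2"
    using u b by (intro pair_term_le_weighted_squares) auto
  have "u_objective K J \<beta> \<mu> u / (\<sigma>^2 * (l1_norm J \<beta>)^2)
      \<le> 2 * pair_term (am 0 - am b) (u 0) (u b) / ?N"
    using u_objective_le_pair_term[OF b] unfolding am_def by (simp add: divide_right_mono)
  also have "\<dots> \<le> u 0 * (al 0 - am 0)^2 / ?N + u b * (al b - am b)^2 / ?N"
    unfolding add_divide_distrib[symmetric] using pair by (intro divide_right_mono) auto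
  also have "\<dots> \<le> f 0 + f b"
    using u b S unfolding f_def al_def am_def by (intro add_mono arm_weighted_kl_lower_bound) auto
  also have "\<dots> = (\<Sum>a\<in>{0, b}. f a)"
    using b by simp
  also have "\<dots> \<le> (\<Sum>a\<in>{0..K}. f a)"
    using b u S unfolding f_def gauss_kl_def by (intro sum_mono2 sum_nonneg) auto
  also have "\<dots> = weighted_kl \<sigma> K J (\<lambda>a i. u a * \<bar>\<beta> i\<bar> / l1_norm J \<beta>) \<mu> lam"
    unfolding f_def weighted_kl_def ..
  finally show ?thesis .
qed

lemma arm_mean_sgn_shift:
  assumes "0 < l1_norm J \<beta>"
  shows "arm_mean J \<beta> (sgn_shift J \<beta> \<mu> c) a = arm_mean J \<beta> \<mu> a + c a"
proof -
  have "\<beta> i * sgn_shift J \<beta> \<mu> c a i = \<beta> i * \<mu> a i + c a / l1_norm J \<beta> * \<bar>\<beta> i\<bar>" for i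
    unfolding sgn_shift_def by (simp add: abs_sgn algebra_simps)
  then have "arm_mean J \<beta> (sgn_shift J \<beta> \<mu> c) a = arm_mean J \<beta> \<mu> a + c a / l1_norm J \<beta> * l1_norm J \<beta>"
    unfolding arm_mean_def l1_norm_def by (simp add: sum.distrib sum_distrib_left)
  then show ?thesis using assms by simp
qed

lemma weighted_kl_sgn_shift_le:
  assumes w: "\<forall>a\<in>{0..K}. \<forall>i\<in>{1..J}. 0 \<le> w a i"
  shows "weighted_kl \<sigma> K J w \<mu> (sgn_shift J \<beta> \<mu> c)
     \<le> (\<Sum>a\<in>{0..K}. (c a)^2 * (\<Sum>i\<in>{1..J}. w a i)) / (2 * \<sigma>^2 * (l1_norm J \<beta>)^2)"
proof -
  have "w a i * gauss_kl \<sigma> (\<mu> a i) (sgn_shift J \<beta> \<mu> c a i)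
      \<le> (c a)^2 * w a i / (2 * \<sigma>^2 * (l1_norm J \<beta>)^2)"
    if "a \<in> {0..K}" "i \<in> {1..J}" for a i
  proof -
    have "(sgn (\<beta> i))^2 \<le> (1::real)"
      by (simp add: sgn_if)
    then have "w a i * (c a * sgn (\<beta> i))^2 \<le> w a i * (c a)^2"
      using w that by (intro mult_left_mono) (auto simp: power_mult_distrib mult_left_le)
    moreover have "w a i * gauss_kl \<sigma> (\<mu> a i) (sgn_shift J \<beta> \<mu> c a i)
        = w a i * (c a * sgn (\<beta> i))^2 / (2 * \<sigma>^2 * (l1_norm J \<beta>)^2)"
      unfolding gauss_kl_def sgn_shift_def by (simp add: power_divide mult.commute)
    ultimately show ?thesis
      by (simp add: divide_right_mono mult.commute)
  qed
  then have "weighted_kl \<sigma> K J w \<mu> (sgn_shift J \<beta> \<mu> c)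
      \<le> (\<Sum>a\<in>{0..K}. \<Sum>i\<in>{1..J}. (c a)^2 * w a i / (2 * \<sigma>^2 * (l1_norm J \<beta>)^2))"
    unfolding weighted_kl_def by (intro sum_mono) auto
  then show ?thesis
    by (simp add: sum_distrib_left sum_divide_distrib)
qed

lemma mem_Alt_of_reversed_arm:
  assumes b: "b \<in> {1..K}"
    and flip: "(arm_mean J \<beta> lam 0 - arm_mean J \<beta> lam b) * (arm_mean J \<beta> \<mu> 0 - arm_mean J \<beta> \<mu> b) < 0"
    and no_tie: "\<forall>a\<in>{1..K} - {b}. arm_mean J \<beta> lam a \<noteq> arm_mean J \<beta> lam 0"
  shows "lam \<in> Alt K J \<beta> \<mu>"
proof -
  have "lam \<in> Lset K J \<beta>"
    using flip no_tie unfolding Lset_def by auto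
  moreover have "(b \<in> better_set K J \<beta> lam) \<noteq> (b \<in> better_set K J \<beta> \<mu>)"
    using b flip unfolding better_set_def by (auto simp: mult_less_0_iff)
  ultimately show ?thesis
    unfolding Alt_def by auto
qed

(* Arm 0 moves by D Wb / (W0 + Wb) and arm b by the rest of D, so both land on the
   W-weighted average of the two means. *)
lemma pair_term_eq_balanced_shift:
  fixes D W0 Wb :: real
  assumes "0 \<le> W0" "0 \<le> Wb"
  shows "(D * Wb / (W0 + Wb))^2 * W0 + (D - D * Wb / (W0 + Wb))^2 * Wb = 2 * pair_term D W0 Wb"
proof (cases "0 < W0 \<and> 0 < Wb")
  case True
  then have "D - D * Wb / (W0 + Wb) = D * W0 / (W0 + Wb)"
    by (simp add: field_simps)
  moreover have "(D * Wb / (W0 + Wb))^2 * W0 + (D * W0 / (W0 + Wb))^2 * Wb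
      = D^2 * W0 * Wb * (W0 + Wb) / (W0 + Wb)^2"
    by (simp add: power2_eq_square field_simps add_divide_distrib[symmetric])
  moreover have "\<dots> = D^2 * W0 * Wb / (W0 + Wb)"
    using True by (simp add: power2_eq_square)
  moreover have "2 * pair_term D W0 Wb = D^2 * W0 * Wb / (W0 + Wb)"
    using True unfolding pair_term_def by (simp add: field_simps)
  ultimately show ?thesis by simp
next
  case False
  then have "W0 = 0 \<or> Wb = 0" using assms by auto
  then show ?thesis unfolding pair_term_def by auto
qed

lemma finite_scalings_hitting:
  fixes x p :: real
  assumes "finite A" and "\<forall>a\<in>A. y a \<noteq> x"
  shows "finite {t. \<exists>a\<in>A. y a = x - t * p}"
proof (rule finite_subset)
  show "{t. \<exists>a\<in>A. y a = x - t * p} \<subseteq> (\<lambda>a. (x - y a) / p) ` A"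
  proof
    fix t assume "t \<in> {t. \<exists>a\<in>A. y a = x - t * p}"
    then obtain a where a: "a \<in> A" and hit: "y a = x - t * p"
      by blast
    with assms(2) have "p \<noteq> 0" by auto
    with hit have "t = (x - y a) / p" by (simp add: field_simps)
    with a show "t \<in> (\<lambda>a. (x - y a) / p) ` A" by blast
  qed
qed (use assms in simp)

lemma sgn_shift_alternatives:
  assumes S: "0 < l1_norm J \<beta>" and \<mu>: "\<mu> \<in> Lset K J \<beta>" and b: "b \<in> {1..K}"
    and w: "\<forall>a\<in>{0..K}. \<forall>i\<in>{1..J}. 0 \<le> w a i"
  obtains B lam where "finite B"
    and "\<And>t. 1 < t \<Longrightarrow> t \<notin> B \<Longrightarrow> lam t \<in> Alt K J \<beta> \<mu>"
    and "\<And>t. weighted_kl \<sigma> K J w \<mu> (lam t) \<le> t^2 * (pair_term (arm_mean J \<beta> \<mu> 0 - arm_mean J \<beta> \<mu> b)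
          (\<Sum>i\<in>{1..J}. w 0 i) (\<Sum>i\<in>{1..J}. w b i) / (\<sigma>^2 * (l1_norm J \<beta>)^2))"
proof -
  define am where "am = arm_mean J \<beta> \<mu>"
  define W where "W a = (\<Sum>i\<in>{1..J}. w a i)" for a
  define D where "D = am 0 - am b"
  define p where "p = D * W b / (W 0 + W b)"
  define c where "c t a = (if a = 0 then - t * p else if a = b then t * (D - p) else 0)" for t a
  \<comment> \<open>the scalings t at which the moved control ties with an unmoved arm\<close>
  define B where "B = {t. \<exists>a\<in>{1..K} - {b}. am a = am 0 - t * p}"
  have b0: "b \<noteq> 0" using b by simp
  have D0: "D \<noteq> 0" using \<mu> b unfolding Lset_def D_def am_def by auto
  have means: "arm_mean J \<beta> (sgn_shift J \<beta> \<mu> (c t)) a = am a + c t a" for t a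
    unfolding am_def by (rule arm_mean_sgn_shift[OF S])
  have "finite B"
    unfolding B_def using \<mu> by (intro finite_scalings_hitting) (auto simp: Lset_def am_def)
  moreover have "sgn_shift J \<beta> \<mu> (c t) \<in> Alt K J \<beta> \<mu>" if t: "1 < t" "t \<notin> B" for t
  proof (rule mem_Alt_of_reversed_arm[OF b])
    have "arm_mean J \<beta> (sgn_shift J \<beta> \<mu> (c t)) 0 - arm_mean J \<beta> (sgn_shift J \<beta> \<mu> (c t)) b = (1 - t) * D"
      unfolding means c_def D_def using b0 by (simp add: algebra_simps)
    moreover have "(1 - t) * (D * D) < 0"
      using t D0 by (intro mult_neg_pos) (auto simp: zero_less_mult_iff)
    ultimately show "(arm_mean J \<beta> (sgn_shift J \<beta> \<mu> (c t)) 0 - arm_mean J \<beta> (sgn_shift J \<beta> \<mu> (c t)) b)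
        * (arm_mean J \<beta> \<mu> 0 - arm_mean J \<beta> \<mu> b) < 0"
      unfolding D_def am_def by (simp add: mult.assoc)
    show "\<forall>a\<in>{1..K} - {b}. arm_mean J \<beta> (sgn_shift J \<beta> \<mu> (c t)) a \<noteq> arm_mean J \<beta> (sgn_shift J \<beta> \<mu> (c t)) 0"
      using t(2) unfolding means B_def c_def by auto
  qed
  moreover have "weighted_kl \<sigma> K J w \<mu> (sgn_shift J \<beta> \<mu> (c t))
      \<le> t^2 * (pair_term D (W 0) (W b) / (\<sigma>^2 * (l1_norm J \<beta>)^2))" for t
  proof -
    have W_nonneg: "0 \<le> W a" if "a \<in> {0..K}" for a
      unfolding W_def using w that by (intro sum_nonneg) auto
    have "(\<Sum>a\<in>{0..K}. (c t a)^2 * W a) = (\<Sum>a\<in>{0, b}. (c t a)^2 * W a)"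
      using b by (intro sum.mono_neutral_right) (auto simp: c_def)
    also have "\<dots> = t^2 * ((p^2 * W 0) + (D - p)^2 * W b)"
      using b0 unfolding c_def by (simp add: power_mult_distrib distrib_left mult_ac)
    also have "\<dots> = t^2 * (2 * pair_term D (W 0) (W b))"
      using pair_term_eq_balanced_shift[of "W 0" "W b" D] W_nonneg[of 0] W_nonneg[of b] b
      unfolding p_def by simp
    finally show ?thesis
      using weighted_kl_sgn_shift_le[OF w, of \<sigma> \<mu> \<beta> "c t"] unfolding W_def by simp
  qed
  ultimately show ?thesis
    using that[of B "\<lambda>t. sgn_shift J \<beta> \<mu> (c t)"] unfolding D_def am_def W_def by blast
qed

lemma eventually_at_right_not_in_finite:
  fixes x :: real
  assumes "finite B"
  shows "eventually (\<lambda>t. t \<notin> B) (at_right x)"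
proof -
  have "open (- (B - {x}))"
    using assms by (intro open_Compl finite_imp_closed) auto
  then have "eventually (\<lambda>t. t \<in> - (B - {x}) - {x}) (at x)"
    by (rule eventually_at_in_open) simp
  then have "eventually (\<lambda>t. t \<notin> B) (at x)"
    by eventually_elim auto
  then show ?thesis
    by (rule filter_leD[OF at_le[OF subset_UNIV], rotated])
qed

lemma inner_val_le_u_objective:
  assumes S: "0 < l1_norm J \<beta>" and K: "1 \<le> K" and \<mu>: "\<mu> \<in> Lset K J \<beta>"
    and w: "\<forall>a\<in>{0..K}. \<forall>i\<in>{1..J}. 0 \<le> w a i"
  shows "inner_val \<sigma> K J \<beta> \<mu> w
     \<le> u_objective K J \<beta> \<mu> (\<lambda>a. \<Sum>i\<in>{1..J}. w a i) / (\<sigma>^2 * (l1_norm J \<beta>)^2)"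
proof -
  obtain b where b: "b \<in> {1..K}" and attained: "u_objective K J \<beta> \<mu> (\<lambda>a. \<Sum>i\<in>{1..J}. w a i)
      = pair_term (arm_mean J \<beta> \<mu> 0 - arm_mean J \<beta> \<mu> b) (\<Sum>i\<in>{1..J}. w 0 i) (\<Sum>i\<in>{1..J}. w b i)"
    using u_objective_attained[OF K] by blast
  define G where "G = u_objective K J \<beta> \<mu> (\<lambda>a. \<Sum>i\<in>{1..J}. w a i) / (\<sigma>^2 * (l1_norm J \<beta>)^2)"
  obtain B lam where B: "finite (B :: real set)" and alt: "\<And>t. 1 < t \<Longrightarrow> t \<notin> B \<Longrightarrow> lam t \<in> Alt K J \<beta> \<mu>"
    and cost: "\<And>t. weighted_kl \<sigma> K J w \<mu> (lam t) \<le> t^2 * G"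
    by (rule sgn_shift_alternatives[OF S \<mu> b w, of \<sigma>, folded attained G_def]) (rule that)
  have bdd: "bdd_below (weighted_kl \<sigma> K J w \<mu> ` Alt K J \<beta> \<mu>)"
    using weighted_kl_nonneg[OF w] by (intro bdd_belowI[where m = 0]) auto
  have "eventually (\<lambda>t. inner_val \<sigma> K J \<beta> \<mu> w \<le> t^2 * G) (at_right 1)"
    using eventually_at_right_less[of 1] eventually_at_right_not_in_finite[OF B, of 1]
  proof eventually_elim
    case (elim t)
    then have "inner_val \<sigma> K J \<beta> \<mu> w \<le> weighted_kl \<sigma> K J w \<mu> (lam t)"
      unfolding inner_val_eq_INF_weighted_kl using alt bdd by (intro cINF_lower) auto
    then show ?case using cost[of t] by (rule order_trans)
  qed
  moreover have "((\<lambda>t. t^2 * G) \<longlongrightarrow> 1^2 * G) (at_right 1)"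
    by (intro tendsto_intros)
  ultimately show ?thesis
    unfolding G_def by (intro tendsto_lowerbound) auto
qed

lemma Alt_nonempty:
  assumes S: "0 < l1_norm J \<beta>" and K: "1 \<le> K" and \<mu>: "\<mu> \<in> Lset K J \<beta>"
  shows "Alt K J \<beta> \<mu> \<noteq> {}"
proof -
  have b: "1 \<in> {1..K}" and w: "\<forall>a\<in>{0..K}. \<forall>i\<in>{1..J}. 0 \<le> (0::real)"
    using K by simp_all
  obtain B lam where B: "finite (B :: real set)" and alt: "\<And>t. 1 < t \<Longrightarrow> t \<notin> B \<Longrightarrow> lam t \<in> Alt K J \<beta> \<mu>"
    by (rule sgn_shift_alternatives[OF S \<mu> b w, where \<sigma> = 1]) (rule that)
  have "eventually (\<lambda>t. 1 < t \<and> t \<notin> B) (at_right (1::real))"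
    using eventually_at_right_less eventually_at_right_not_in_finite[OF B]
    by (rule eventually_conj)
  then obtain t where "1 < t" "t \<notin> B"
    using eventually_happens'[OF trivial_limit_at_right_real] by blast
  with alt show ?thesis by blast
qed

lemma u_objective_le_inner_val_abs_weights:
  assumes S: "0 < l1_norm J \<beta>" and K: "1 \<le> K" and \<mu>: "\<mu> \<in> Lset K J \<beta>"
    and u: "\<forall>a\<in>{0..K}. 0 \<le> u a"
  shows "u_objective K J \<beta> \<mu> u / (\<sigma>^2 * (l1_norm J \<beta>)^2)
     \<le> inner_val \<sigma> K J \<beta> \<mu> (\<lambda>a i. u a * \<bar>\<beta> i\<bar> / l1_norm J \<beta>)"
  unfolding inner_val_eq_INF_weighted_kl
  using Alt_nonempty[OF S K \<mu>] u_objective_le_weighted_kl_abs_weights[OF S _ u]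
  by (rule cINF_greatest)

lemma abs_weights_mem_C_active:
  assumes S: "0 < l1_norm J \<beta>" and u: "u \<in> simplex_arms K"
  shows "(\<lambda>a i. u a * \<bar>\<beta> i\<bar> / l1_norm J \<beta>) \<in> C_active K J"
proof -
  have "(\<Sum>a\<in>{0..K}. \<Sum>i\<in>{1..J}. u a * \<bar>\<beta> i\<bar> / l1_norm J \<beta>) = (\<Sum>a\<in>{0..K}. u a)"
    using S unfolding l1_norm_def by (simp flip: sum_distrib_left sum_divide_distrib)
  then show ?thesis
    using S u unfolding C_active_def simplex_arms_def by auto
qed

lemma row_sums_mem_simplex_arms:
  "w \<in> C_active K J \<Longrightarrow> (\<lambda>a. \<Sum>i\<in>{1..J}. w a i) \<in> simplex_arms K"
  unfolding C_active_def simplex_arms_def by (auto intro: sum_nonneg)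

lemma optimal_weights_C_active:
  assumes S: "0 < l1_norm J \<beta>" and K: "1 \<le> K" and \<mu>: "\<mu> \<in> Lset K J \<beta>"
    and u: "u \<in> simplex_arms K"
    and u_max: "\<forall>u'\<in>simplex_arms K. u_objective K J \<beta> \<mu> u' \<le> u_objective K J \<beta> \<mu> u"
  shows "optimal_weights \<sigma> K J \<beta> \<mu> (C_active K J) (\<lambda>a i. u a * \<bar>\<beta> i\<bar> / l1_norm J \<beta>)"
  unfolding optimal_weights_def
proof (intro conjI ballI)
  show "(\<lambda>a i. u a * \<bar>\<beta> i\<bar> / l1_norm J \<beta>) \<in> C_active K J"
    using S u by (rule abs_weights_mem_C_active)
  fix w assume w: "w \<in> C_active K J"
  have "inner_val \<sigma> K J \<beta> \<mu> w
      \<le> u_objective K J \<beta> \<mu> (\<lambda>a. \<Sum>i\<in>{1..J}. w a i) / (\<sigma>^2 * (l1_norm J \<beta>)^2)"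
    using w unfolding C_active_def by (intro inner_val_le_u_objective[OF S K \<mu>]) auto
  also have "\<dots> \<le> u_objective K J \<beta> \<mu> u / (\<sigma>^2 * (l1_norm J \<beta>)^2)"
    using u_max row_sums_mem_simplex_arms[OF w] by (intro divide_right_mono) auto
  also have "\<dots> \<le> inner_val \<sigma> K J \<beta> \<mu> (\<lambda>a i. u a * \<bar>\<beta> i\<bar> / l1_norm J \<beta>)"
    using u unfolding simplex_arms_def by (intro u_objective_le_inner_val_abs_weights[OF S K \<mu>]) auto
  finally show "inner_val \<sigma> K J \<beta> \<mu> w \<le> inner_val \<sigma> K J \<beta> \<mu> (\<lambda>a i. u a * \<bar>\<beta> i\<bar> / l1_norm J \<beta>)" .
qed

lemma optimal_weights_subset:
  "optimal_weights \<sigma> K J \<beta> \<mu> C' w \<Longrightarrow> w \<in> C \<Longrightarrow> C \<subseteq> C' \<Longrightarrow> optimal_weights \<sigma> K J \<beta> \<mu> C w"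
  unfolding optimal_weights_def by blast

lemma C_agnostic_subset_C_active:
  assumes "\<alpha> \<in> simplex_pops J"
  shows "C_agnostic K J \<alpha> \<subseteq> C_active K J"
proof
  fix w assume "w \<in> C_agnostic K J \<alpha>"
  then obtain u where u: "u \<in> simplex_arms K" and w: "\<forall>a\<in>{0..K}. \<forall>i\<in>{1..J}. w a i = \<alpha> i * u a"
    unfolding C_agnostic_def by blast
  have "(\<Sum>a\<in>{0..K}. \<Sum>i\<in>{1..J}. w a i) = (\<Sum>a\<in>{0..K}. u a * (\<Sum>i\<in>{1..J}. \<alpha> i))"
    using w by (simp add: sum_distrib_left mult.commute)
  then show "w \<in> C_active K J"
    using assms u w unfolding C_active_def simplex_arms_def simplex_pops_def by auto
qed

lemma abs_weights_mem_C_agnostic_C_prop: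
  assumes \<alpha>: "\<alpha> \<in> simplex_pops J" and \<alpha>\<beta>: "\<forall>i\<in>{1..J}. \<alpha> i = \<beta> i" and u: "u \<in> simplex_arms K"
  shows "(\<lambda>a i. u a * \<bar>\<beta> i\<bar> / l1_norm J \<beta>) \<in> C_agnostic K J \<alpha> \<inter> C_prop K J \<alpha>"
proof -
  have abs_eq: "\<bar>\<beta> i\<bar> = \<alpha> i" if "i \<in> {1..J}" for i
    using \<alpha> \<alpha>\<beta> that unfolding simplex_pops_def by auto
  then have S: "l1_norm J \<beta> = 1"
    using \<alpha> unfolding l1_norm_def simplex_pops_def by simp
  have "(\<lambda>a i. u a * \<bar>\<beta> i\<bar> / l1_norm J \<beta>) \<in> C_agnostic K J \<alpha>"
    using u abs_eq unfolding C_agnostic_def S by (auto simp: mult.commute)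
  moreover have "(\<Sum>a\<in>{0..K}. u a * \<bar>\<beta> i\<bar> / l1_norm J \<beta>) = \<alpha> i" if "i \<in> {1..J}" for i
    using u abs_eq[OF that] unfolding S simplex_arms_def by (simp flip: sum_distrib_right)
  ultimately show ?thesis
    using abs_weights_mem_C_active[of J \<beta> u K] u S unfolding C_prop_def by auto
qed

theorem proposition3:
  fixes K J :: nat and \<sigma> :: real
    and \<mu> :: "nat \<Rightarrow> nat \<Rightarrow> real" and \<beta> \<alpha> u :: "nat \<Rightarrow> real"
  assumes K: "K \<ge> 1"
    and sigma: "\<sigma> > 0"
    and alpha: "\<alpha> \<in> simplex_pops J"
    and muL: "\<mu> \<in> Lset K J \<beta>"
    and beta_nz: "\<exists>i\<in>{1..J}. \<beta> i \<noteq> 0"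
    and u_arg: "u \<in> simplex_arms K"
    and u_max: "\<forall>u'\<in>simplex_arms K. u_objective K J \<beta> \<mu> u' \<le> u_objective K J \<beta> \<mu> u"
  shows "optimal_weights \<sigma> K J \<beta> \<mu> (C_active K J)
           (\<lambda>a i. u a * \<bar>\<beta> i\<bar> / (\<Sum>j\<in>{1..J}. \<bar>\<beta> j\<bar>))
       \<and> ((\<forall>i\<in>{1..J}. \<alpha> i = \<beta> i) \<longrightarrow>
            optimal_weights \<sigma> K J \<beta> \<mu> (C_agnostic K J \<alpha>)
              (\<lambda>a i. u a * \<bar>\<beta> i\<bar> / (\<Sum>j\<in>{1..J}. \<bar>\<beta> j\<bar>))
          \<and> optimal_weights \<sigma> K J \<beta> \<mu> (C_prop K J \<alpha>)
              (\<lambda>a i. u a * \<bar>\<beta> i\<bar> / (\<Sum>j\<in>{1..J}. \<bar>\<beta> j\<bar>)))"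
proof -
  have S: "0 < l1_norm J \<beta>"
    using beta_nz by (rule l1_norm_pos)
  have active: "optimal_weights \<sigma> K J \<beta> \<mu> (C_active K J) (\<lambda>a i. u a * \<bar>\<beta> i\<bar> / l1_norm J \<beta>)"
    using S K muL u_arg u_max by (rule optimal_weights_C_active)
  moreover have "optimal_weights \<sigma> K J \<beta> \<mu> C (\<lambda>a i. u a * \<bar>\<beta> i\<bar> / l1_norm J \<beta>)"
    if "\<forall>i\<in>{1..J}. \<alpha> i = \<beta> i" and "C \<in> {C_agnostic K J \<alpha>, C_prop K J \<alpha>}" for C
    using abs_weights_mem_C_agnostic_C_prop[OF alpha that(1) u_arg] that(2)
      C_agnostic_subset_C_active[OF alpha]
    by (auto simp: C_prop_def intro: optimal_weights_subset[OF active])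
  ultimately show ?thesis
    unfolding l1_norm_def by blast
qed

end
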